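(* Let $l$ be a positive integer, let $G$ be an arbitrary graph and let $H$ be an $l$-degenerate graph. Then $AT(G+_S H)\le 3$ if $l\in\{1,2\}$, and $AT(G+_S H)\le l+1$ if $l\ge 3$.
   Context: A graph is $k$-degenerate if its vertices can be successively deleted so that each deleted vertex has degree at most $k$ at the time of deletion. For an orientation $D$, a subdigraph is Eulerian if every vertex has equal in- and outdegree in it; $D$ is an AT-orientation if the numbers of Eulerian subgraphs with an even and with an odd number of arcs differ; $AT(G)$ is the smallest $k$ such that $G$ has an AT-orientation of maximum outdegree at most $k-1$. $S(G)$ is obtained from $G$ by subdividing each edge once, with vertex set identified with $V(G)\cup E(G)$. $G+_S H$ has vertex set $(V(G)\cup E(G))\times V(H)$, with $(u_1,u_2)\sim(v_1,v_2)$ iff [$u_1=v_1\in V(G)$ and $u_2v_2\in E(H)$] or [$u_2=v_2$ and $u_1v_1\in E(S(G))$]. *)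

theory Defs
  imports Main
begin

definition graph :: "'a set \<Rightarrow> 'a set set \<Rightarrow> bool" where
  "graph V E \<longleftrightarrow> finite V \<and> (\<forall>e\<in>E. e \<subseteq> V \<and> card e = 2)"

definition degree :: "'a set \<Rightarrow> 'a set set \<Rightarrow> 'a \<Rightarrow> nat" where
  "degree V E v = card {w\<in>V. {v, w} \<in> E}"

inductive degenerate :: "nat \<Rightarrow> 'a set \<Rightarrow> 'a set set \<Rightarrow> bool" for k where
  empty: "degenerate k {} E"
| delete: "v \<in> V \<Longrightarrow> degree V E v \<le> k \<Longrightarrow> degenerate k (V - {v}) E \<Longrightarrow> degenerate k V E"

text \<open>Orientations as sets of arcs (u,v), meaning u \<rightarrow> v.\<close>
definition is_orientation :: "'a set set \<Rightarrow> ('a \<times> 'a) set \<Rightarrow> bool" where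
  "is_orientation E D \<longleftrightarrow> (\<forall>(u, v)\<in>D. {u, v} \<in> E) \<and>
     (\<forall>u v. {u, v} \<in> E \<longrightarrow> ((u, v) \<in> D \<longleftrightarrow> (v, u) \<notin> D))"

definition outdeg :: "('a \<times> 'a) set \<Rightarrow> 'a \<Rightarrow> nat" where
  "outdeg D v = card {w. (v, w) \<in> D}"

definition indeg :: "('a \<times> 'a) set \<Rightarrow> 'a \<Rightarrow> nat" where
  "indeg D v = card {w. (w, v) \<in> D}"

text \<open>Eulerian (spanning) subdigraphs of D, identified with their arc sets.\<close>
definition eulerian_subgraphs :: "('a \<times> 'a) set \<Rightarrow> ('a \<times> 'a) set set" where
  "eulerian_subgraphs D = {A. A \<subseteq> D \<and> (\<forall>v. indeg A v = outdeg A v)}"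

definition AT_orientation :: "('a \<times> 'a) set \<Rightarrow> bool" where
  "AT_orientation D \<longleftrightarrow>
     card {A \<in> eulerian_subgraphs D. even (card A)} \<noteq> card {A \<in> eulerian_subgraphs D. odd (card A)}"

definition AT :: "'a set \<Rightarrow> 'a set set \<Rightarrow> nat" where
  "AT V E = (LEAST k. \<exists>D. is_orientation E D \<and> AT_orientation D \<and> (\<forall>v\<in>V. outdeg D v + 1 \<le> k))"

text \<open>Subdivision S(G), vertex set V(G) \<union> E(G) encoded as a sum type.\<close>
definition subdiv_vertices :: "'a set \<Rightarrow> 'a set set \<Rightarrow> ('a + 'a set) set" where
  "subdiv_vertices V E = Inl ` V \<union> Inr ` E"

definition subdiv_edges :: "'a set \<Rightarrow> 'a set set \<Rightarrow> ('a + 'a set) set set" where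
  "subdiv_edges V E = {{Inl v, Inr e} | v e. e \<in> E \<and> v \<in> e}"

definition sprod_vertices :: "'a set \<Rightarrow> 'a set set \<Rightarrow> 'b set \<Rightarrow> 'b set set \<Rightarrow> (('a + 'a set) \<times> 'b) set" where
  "sprod_vertices VG EG VH EH = subdiv_vertices VG EG \<times> VH"

definition sprod_adj :: "'a set \<Rightarrow> 'a set set \<Rightarrow> 'b set \<Rightarrow> 'b set set \<Rightarrow>
    ('a + 'a set) \<times> 'b \<Rightarrow> ('a + 'a set) \<times> 'b \<Rightarrow> bool" where
  "sprod_adj VG EG VH EH x y \<longleftrightarrow>
     (fst x = fst y \<and> fst x \<in> Inl ` VG \<and> {snd x, snd y} \<in> EH) \<or>
     (snd x = snd y \<and> {fst x, fst y} \<in> subdiv_edges VG EG)"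

definition sprod_edges :: "'a set \<Rightarrow> 'a set set \<Rightarrow> 'b set \<Rightarrow> 'b set set \<Rightarrow> (('a + 'a set) \<times> 'b) set set" where
  "sprod_edges VG EG VH EH =
     {{x, y} | x y. x \<in> sprod_vertices VG EG VH EH \<and> y \<in> sprod_vertices VG EG VH EH \<and>
                    sprod_adj VG EG VH EH x y}"

end

theory Submission
  imports Defs
begin

text \<open>Orient every edge towards the endpoint of larger rank, for a ranking r that separates
  adjacent vertices. This orientation is acyclic, so its only Eulerian subgraph is the empty one
  and it is an AT-orientation; its outdegrees are the numbers of later neighbours. A deletion
  sequence witnessing k-degeneracy, read as a ranking, therefore gives AT \<le> k + 1. For G +_S H, a
  ranking of H lifts by placing (e, h) just before and (v, h) just after the rank of h: then a
  subdivision vertex has only its two ends as later neighbours, and (v, h) only the copies (v, h')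
  of the later neighbours h' of h, so every outdegree is at most max l 2.\<close>

definition later_neighbours :: "('a \<Rightarrow> nat) \<Rightarrow> 'a set \<Rightarrow> 'a set set \<Rightarrow> 'a \<Rightarrow> 'a set" where
  "later_neighbours r V E v = {w \<in> V. {v, w} \<in> E \<and> r v < r w}"

definition rank_orientation :: "('a \<Rightarrow> nat) \<Rightarrow> 'a set set \<Rightarrow> ('a \<times> 'a) set" where
  "rank_orientation r E = {(u, w). {u, w} \<in> E \<and> r u < r w}"

lemma degenerate_finite: "degenerate k V E \<Longrightarrow> finite V"
  by (induction rule: degenerate.induct) auto

lemma degenerate_imp_ranking:
  assumes "degenerate k V E"
  shows "\<exists>r :: 'a \<Rightarrow> nat. inj_on r V \<and> (\<forall>v\<in>V. card (later_neighbours r V E v) \<le> k)"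
  using assms
proof (induction rule: degenerate.induct)
  case (empty E)
  show ?case by auto
next
  case (delete v V E)
  then obtain r' :: "'a \<Rightarrow> nat" where inj': "inj_on r' (V - {v})"
    and later': "\<forall>u\<in>V - {v}. card (later_neighbours r' (V - {v}) E u) \<le> k"
    by blast
  \<comment> \<open>The vertex deleted first gets the smallest rank, so all its neighbours are later.\<close>
  define r where "r = (\<lambda>u. Suc (r' u))(v := 0)"
  have "inj_on r V"
    using inj' by (auto simp: r_def inj_on_def)
  moreover have "card (later_neighbours r V E u) \<le> k" if "u \<in> V" for u
  proof (cases "u = v")
    case True
    have "finite (V - {v})"
      using delete.hyps(3) by (rule degenerate_finite)
    then have "finite V" by simp
    then have "card (later_neighbours r V E u) \<le> degree V E v"
      unfolding later_neighbours_def degree_def True by (intro card_mono) auto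
    with delete.hyps(2) show ?thesis by simp
  next
    case False
    then have "later_neighbours r V E u = later_neighbours r' (V - {v}) E u"
      by (auto simp: later_neighbours_def r_def)
    with later' \<open>u \<in> V\<close> False show ?thesis by simp
  qed
  ultimately show ?case by blast
qed

text \<open>Take an arc (u, w) of A whose tail has maximal rank. Its head w has an incoming, hence
  an outgoing arc, so w is a tail as well and r w \<le> r u < r w.\<close>
lemma eulerian_rank_increasing_empty:
  fixes r :: "'a \<Rightarrow> nat"
  assumes "finite A" and "A \<subseteq> {(u, w). r u < r w}" and "\<forall>v. indeg A v = outdeg A v"
  shows "A = {}"
proof (rule ccontr)
  assume "A \<noteq> {}"
  let ?m = "Max (r ` fst ` A)"
  have "?m \<in> r ` fst ` A"
    using \<open>finite A\<close> \<open>A \<noteq> {}\<close> by (intro Max_in) auto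
  then obtain u w where uw: "(u, w) \<in> A" and "r u = ?m"
    by auto
  have max: "r x \<le> r u" if "(x, y) \<in> A" for x y
  proof -
    have "r x \<in> r ` fst ` A"
      using that by force
    with \<open>finite A\<close> show ?thesis
      unfolding \<open>r u = ?m\<close> by (intro Max_ge) auto
  qed
  have "{x. (x, w) \<in> A} \<subseteq> fst ` A"
    by force
  then have "finite {x. (x, w) \<in> A}"
    using \<open>finite A\<close> by (simp add: finite_subset)
  with uw have "indeg A w > 0"
    unfolding indeg_def by (auto simp: card_gt_0_iff)
  with assms(3) have "outdeg A w > 0" by simp
  then obtain y where "(w, y) \<in> A"
    unfolding outdeg_def by (metis (no_types, lifting) card.empty empty_Collect_eq less_irrefl)
  then have "r w \<le> r u"
    by (rule max)
  moreover have "r u < r w"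
    using uw assms(2) by blast
  ultimately show False by simp
qed

lemma AT_orientation_rank_increasing:
  fixes r :: "'a \<Rightarrow> nat"
  assumes "finite D" and "D \<subseteq> {(u, w). r u < r w}"
  shows "AT_orientation D"
proof -
  have "eulerian_subgraphs D = {{}}"
  proof
    show "eulerian_subgraphs D \<subseteq> {{}}"
    proof
      fix A assume "A \<in> eulerian_subgraphs D"
      then have "A \<subseteq> D" and "\<forall>v. indeg A v = outdeg A v"
        by (simp_all add: eulerian_subgraphs_def)
      with assms have "A = {}"
        by (intro eulerian_rank_increasing_empty[of _ r]) (auto intro: finite_subset)
      then show "A \<in> {{}}" by simp
    qed
    show "{{}} \<subseteq> eulerian_subgraphs D"
      by (simp add: eulerian_subgraphs_def indeg_def outdeg_def)
  qed
  then show ?thesis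
    unfolding AT_orientation_def by (simp add: Collect_conj_eq)
qed

lemma is_orientation_rank_orientation:
  assumes "\<And>u w. {u, w} \<in> E \<Longrightarrow> r u \<noteq> r w"
  shows "is_orientation E (rank_orientation r E)"
  using assms by (fastforce simp: is_orientation_def rank_orientation_def insert_commute)

lemma AT_le_Suc_if_ranking:
  assumes "graph V E"
    and "\<And>u w. {u, w} \<in> E \<Longrightarrow> r u \<noteq> r w"
    and "\<forall>v\<in>V. card (later_neighbours r V E v) \<le> k"
  shows "AT V E \<le> Suc k"
proof -
  let ?D = "rank_orientation r E"
  have "?D \<subseteq> V \<times> V" and "finite V"
    using assms(1) by (auto simp: graph_def rank_orientation_def)
  then have "AT_orientation ?D"
    by (intro AT_orientation_rank_increasing[of _ r])
      (auto simp: rank_orientation_def intro: finite_subset)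
  moreover have "outdeg ?D v = card (later_neighbours r V E v)" for v
    using \<open>?D \<subseteq> V \<times> V\<close>
    by (auto simp: outdeg_def later_neighbours_def rank_orientation_def
        intro!: arg_cong[where f = card])
  ultimately have "\<exists>D. is_orientation E D \<and> AT_orientation D \<and> (\<forall>v\<in>V. outdeg D v + 1 \<le> Suc k)"
    using is_orientation_rank_orientation[of E r, OF assms(2)] assms(3)
    by (intro exI[of _ ?D]) simp
  then show ?thesis
    unfolding AT_def by (rule Least_le)
qed

lemma graph_inj_on_edge_neq:
  assumes "graph V E" and "inj_on r V" and "{u, w} \<in> E"
  shows "r u \<noteq> r w"
proof -
  have "{u, w} \<subseteq> V" and "card {u, w} = 2"
    using assms(1,3) unfolding graph_def by blast+
  moreover have "u \<noteq> w"
  proof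
    assume "u = w"
    with \<open>card {u, w} = 2\<close> show False by simp
  qed
  ultimately show ?thesis
    using inj_on_contraD[OF assms(2)] by blast
qed

lemma subdiv_edges_Inl:
  "{Inl v, y} \<in> subdiv_edges VG EG \<longleftrightarrow> (\<exists>e. y = Inr e \<and> v \<in> e \<and> e \<in> EG)"
  by (auto simp: subdiv_edges_def doubleton_eq_iff)

lemma subdiv_edges_Inr:
  "{Inr e, y} \<in> subdiv_edges VG EG \<longleftrightarrow> (\<exists>u. y = Inl u \<and> u \<in> e \<and> e \<in> EG)"
  by (auto simp: subdiv_edges_def doubleton_eq_iff)

lemma sprod_adj_sym: "sprod_adj VG EG VH EH x y \<longleftrightarrow> sprod_adj VG EG VH EH y x"
  unfolding sprod_adj_def by (cases x; cases y) (auto simp: insert_commute)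

lemma doubleton_in_sprod_edges_iff:
  "{x, y} \<in> sprod_edges VG EG VH EH \<longleftrightarrow>
     x \<in> sprod_vertices VG EG VH EH \<and> y \<in> sprod_vertices VG EG VH EH \<and> sprod_adj VG EG VH EH x y"
proof
  assume "{x, y} \<in> sprod_edges VG EG VH EH"
  then obtain a b where ab: "{x, y} = {a, b}" "a \<in> sprod_vertices VG EG VH EH"
    "b \<in> sprod_vertices VG EG VH EH" "sprod_adj VG EG VH EH a b"
    unfolding sprod_edges_def by blast
  then have "(x = a \<and> y = b) \<or> (x = b \<and> y = a)"
    by (simp add: doubleton_eq_iff)
  with ab sprod_adj_sym show
    "x \<in> sprod_vertices VG EG VH EH \<and> y \<in> sprod_vertices VG EG VH EH \<and> sprod_adj VG EG VH EH x y"
    by blast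
next
  assume "x \<in> sprod_vertices VG EG VH EH \<and> y \<in> sprod_vertices VG EG VH EH \<and> sprod_adj VG EG VH EH x y"
  then show "{x, y} \<in> sprod_edges VG EG VH EH"
    unfolding sprod_edges_def by blast
qed

lemma singleton_notin_subdiv_edges: "{z} \<notin> subdiv_edges VG EG"
  by (auto simp: subdiv_edges_def)

lemma graph_sprod:
  assumes "graph VG EG" and "graph VH EH"
  shows "graph (sprod_vertices VG EG VH EH) (sprod_edges VG EG VH EH)"
proof -
  have "finite EG"
    using assms(1) by (auto simp: graph_def intro: finite_subset[of _ "Pow VG"])
  then have "finite (sprod_vertices VG EG VH EH)"
    using assms by (simp add: graph_def sprod_vertices_def subdiv_vertices_def)
  moreover have "x \<noteq> y" if "sprod_adj VG EG VH EH x y" for x y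
  proof
    assume "x = y"
    moreover have "{snd x} \<notin> EH"
      using assms(2) by (force simp: graph_def)
    ultimately show False
      using that singleton_notin_subdiv_edges[of "fst x" VG EG] by (simp add: sprod_adj_def)
  qed
  then have "e \<subseteq> sprod_vertices VG EG VH EH \<and> card e = 2" if "e \<in> sprod_edges VG EG VH EH" for e
    using that unfolding sprod_edges_def by auto
  ultimately show ?thesis
    by (simp add: graph_def)
qed

definition sprod_rank :: "('b \<Rightarrow> nat) \<Rightarrow> ('a + 'a set) \<times> 'b \<Rightarrow> nat" where
  "sprod_rank rH x = 2 * rH (snd x) + (case fst x of Inl _ \<Rightarrow> 1 | Inr _ \<Rightarrow> 0)"

lemma sprod_rank_neq:
  assumes "\<And>h h'. {h, h'} \<in> EH \<Longrightarrow> rH h \<noteq> rH h'"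
    and "{x, y} \<in> sprod_edges VG EG VH EH"
  shows "sprod_rank rH x \<noteq> sprod_rank rH y"
proof -
  have "sprod_adj VG EG VH EH x y"
    using assms(2) doubleton_in_sprod_edges_iff by blast
  then consider "fst x = fst y" "{snd x, snd y} \<in> EH"
    | "snd x = snd y" "{fst x, fst y} \<in> subdiv_edges VG EG"
    by (auto simp: sprod_adj_def)
  then show ?thesis
  proof cases
    case 1
    then show ?thesis
      using assms(1) by (auto simp: sprod_rank_def)
  next
    case 2
    then show ?thesis
      by (cases "fst x") (auto simp: sprod_rank_def subdiv_edges_Inl subdiv_edges_Inr)
  qed
qed

lemma sprod_adj_Inl_iff:
  "sprod_adj VG EG VH EH (Inl v, h) (a, h') \<longleftrightarrow>
     (a = Inl v \<and> v \<in> VG \<and> {h, h'} \<in> EH) \<or> (h' = h \<and> (\<exists>e. a = Inr e \<and> v \<in> e \<and> e \<in> EG))"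
  by (auto simp: sprod_adj_def subdiv_edges_Inl)

lemma sprod_adj_Inr_iff:
  "sprod_adj VG EG VH EH (Inr e, h) (a, h') \<longleftrightarrow> h' = h \<and> (\<exists>u. a = Inl u \<and> u \<in> e \<and> e \<in> EG)"
  by (auto simp: sprod_adj_def subdiv_edges_Inr)

lemma card_later_neighbours_sprod_le:
  assumes "graph VG EG" and "graph VH EH"
    and later: "\<forall>h\<in>VH. card (later_neighbours rH VH EH h) \<le> l"
    and x: "x \<in> sprod_vertices VG EG VH EH"
  shows "card (later_neighbours (sprod_rank rH) (sprod_vertices VG EG VH EH)
           (sprod_edges VG EG VH EH) x) \<le> max l 2"
proof -
  let ?N = "later_neighbours (sprod_rank rH) (sprod_vertices VG EG VH EH) (sprod_edges VG EG VH EH) x"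
  obtain a h where xah: "x = (a, h)"
    by fastforce
  have N: "sprod_adj VG EG VH EH (a, h) (a', h') \<and> h' \<in> VH \<and>
      sprod_rank rH (a, h) < sprod_rank rH (a', h')" if "(a', h') \<in> ?N" for a' h'
    using that by (simp add: later_neighbours_def doubleton_in_sprod_edges_iff sprod_vertices_def xah)
  show ?thesis
  proof (cases a)
    case (Inl v)
    have "?N \<subseteq> Pair (Inl v) ` later_neighbours rH VH EH h"
    proof
      fix w assume "w \<in> ?N"
      moreover obtain a' h' where "w = (a', h')"
        by fastforce
      ultimately show "w \<in> Pair (Inl v) ` later_neighbours rH VH EH h"
        using N[of a' h'] by (auto simp: Inl sprod_adj_Inl_iff sprod_rank_def later_neighbours_def)
    qed
    moreover have "finite (later_neighbours rH VH EH h)"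
      using assms(2) by (simp add: graph_def later_neighbours_def)
    ultimately have "card ?N \<le> card (later_neighbours rH VH EH h)"
      by (meson card_image_le card_mono finite_imageI le_trans)
    moreover have "h \<in> VH"
      using x by (simp add: sprod_vertices_def xah)
    ultimately show ?thesis
      using later by fastforce
  next
    case (Inr e)
    have "?N \<subseteq> (\<lambda>u. (Inl u, h)) ` e"
    proof
      fix w assume "w \<in> ?N"
      moreover obtain a' h' where "w = (a', h')"
        by fastforce
      ultimately show "w \<in> (\<lambda>u. (Inl u, h)) ` e"
        using N[of a' h'] by (auto simp: Inr sprod_adj_Inr_iff)
    qed
    moreover have "e \<in> EG"
      using x by (simp add: sprod_vertices_def subdiv_vertices_def xah Inr image_iff)
    then have "card e = 2"
      using assms(1) by (simp add: graph_def)
    then have "finite e"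
      by (metis card.infinite zero_neq_numeral)
    ultimately have "card ?N \<le> card e"
      by (meson card_image_le card_mono finite_imageI le_trans)
    with \<open>card e = 2\<close> show ?thesis by simp
  qed
qed

theorem corollary3p1:
  fixes VG :: "'a set" and EG :: "'a set set" and VH :: "'b set" and EH :: "'b set set"
    and l :: nat
  assumes "graph VG EG" and "graph VH EH" and "l \<ge> 1" and "degenerate l VH EH"
  shows "AT (sprod_vertices VG EG VH EH) (sprod_edges VG EG VH EH)
           \<le> (if l \<le> 2 then 3 else l + 1)"
proof -
  obtain rH :: "'b \<Rightarrow> nat" where "inj_on rH VH"
    and later: "\<forall>h\<in>VH. card (later_neighbours rH VH EH h) \<le> l"
    using degenerate_imp_ranking[OF assms(4)] by blast
  have "AT (sprod_vertices VG EG VH EH) (sprod_edges VG EG VH EH) \<le> Suc (max l 2)"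
  proof (rule AT_le_Suc_if_ranking)
    show "graph (sprod_vertices VG EG VH EH) (sprod_edges VG EG VH EH)"
      using assms(1,2) by (rule graph_sprod)
    show "\<And>x y. {x, y} \<in> sprod_edges VG EG VH EH \<Longrightarrow> sprod_rank rH x \<noteq> sprod_rank rH y"
      by (rule sprod_rank_neq[OF graph_inj_on_edge_neq[OF assms(2) \<open>inj_on rH VH\<close>]])
    show "\<forall>x\<in>sprod_vertices VG EG VH EH. card (later_neighbours (sprod_rank rH)
        (sprod_vertices VG EG VH EH) (sprod_edges VG EG VH EH) x) \<le> max l 2"
      using card_later_neighbours_sprod_le[OF assms(1,2) later] by blast
  qed
  also have "Suc (max l 2) = (if l \<le> 2 then 3 else l + 1)"
    by (simp add: max_def)
  finally show ?thesis .
qed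

end
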